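(* Let $n\ge3$, $\alpha\in(0,n)$, $p,q>0$ with $pq>1$, and let $u,v$ be positive bounded solutions on $\mathbb{R}^n$ of $$u(x)=\int_{\mathbb{R}^n}\frac{v^q(y)\,dy}{|x-y|^{n-\alpha}},\qquad v(x)=\int_{\mathbb{R}^n}\frac{u^p(y)\,dy}{|x-y|^{n-\alpha}}.$$ (1) Let $\theta_1<\frac{\alpha(q+1)}{pq-1}$ and $\theta_2<\frac{\alpha(p+1)}{pq-1}$. Then there is no $C>0$ such that $u(x)\ge C(1+|x|)^{-\theta_1}$ for all sufficiently large $|x|$, and there is no $C>0$ such that $v(x)\ge C(1+|x|)^{-\theta_2}$ for all sufficiently large $|x|$. (2) Suppose moreover $(u,v)\notin L^{r_0}(\mathbb{R}^n)\times L^{s_0}(\mathbb{R}^n)$, where $r_0=\frac{n(pq-1)}{\alpha(q+1)}$, $s_0=\frac{n(pq-1)}{\alpha(p+1)}$. Let $\theta_3>\frac{\alpha(q+1)}{pq-1}$ and $\theta_4>\frac{\alpha(p+1)}{pq-1}$. Then there is no $C>0$ such that $u(x)\le C(1+|x|)^{-\theta_3}$ for all sufficiently large $|x|$, and there is no $C>0$ such that $v(x)\le C(1+|x|)^{-\theta_4}$ for all sufficiently large $|x|$.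
   Context: Positive solutions are positive measurable functions satisfying both integral identities (finite) at every point. *)

theory Defs
  imports "HOL-Analysis.Analysis"
begin

definition riesz_pot :: "real \<Rightarrow> (real^'n \<Rightarrow> real) \<Rightarrow> real^'n \<Rightarrow> ennreal" where
  "riesz_pot \<alpha> f x = (\<integral>\<^sup>+ y. ennreal (f y / norm (x - y) powr (real CARD('n) - \<alpha>)) \<partial>lborel)"

definition pos_bdd_solution ::
  "real \<Rightarrow> real \<Rightarrow> real \<Rightarrow> (real^'n \<Rightarrow> real) \<Rightarrow> (real^'n \<Rightarrow> real) \<Rightarrow> bool" where
  "pos_bdd_solution \<alpha> p q u v \<longleftrightarrow>
     u \<in> borel_measurable lborel \<and> v \<in> borel_measurable lborel \<and>
     (\<forall>x. u x > 0) \<and> (\<forall>x. v x > 0) \<and>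
     bounded (range u) \<and> bounded (range v) \<and>
     (\<forall>x. riesz_pot \<alpha> (\<lambda>y. v y powr q) x = ennreal (u x)) \<and>
     (\<forall>x. riesz_pot \<alpha> (\<lambda>y. u y powr p) x = ennreal (v x))"

definition in_Lp :: "real \<Rightarrow> (real^'n \<Rightarrow> real) \<Rightarrow> bool" where
  "in_Lp r f \<longleftrightarrow> f \<in> borel_measurable lborel \<and>
     (\<integral>\<^sup>+ x. ennreal (\<bar>f x\<bar> powr r) \<partial>lborel) < \<infinity>"

end

theory Submission
  imports Defs
begin

text \<open>
  Write A = \<alpha>(q+1)/(pq-1) and B = \<alpha>(p+1)/(pq-1), so that pA - \<alpha> = B and qB - \<alpha> = A.
  Riesz potentials shift power-law decay by \<alpha>: a lower bound u \<ge> c|x|^-\<theta> gives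
  v \<ge> c'|x|^-(p\<theta>-\<alpha>) by integrating only over a ball of radius |x|/2 near x, and an upper
  bound u \<le> C|x|^-\<theta> with \<alpha> < p\<theta> < n gives v \<le> C'|x|^-(p\<theta>-\<alpha>) by the convolution
  estimate for two powers of the norm.

  (1) A round trip u \<rightarrow> v \<rightarrow> u maps a lower exponent \<theta> to A + pq(\<theta> - A); for \<theta> < A,
  iterating makes the exponent negative, which contradicts boundedness.

  (2) The mass of u^p near the origin gives v \<ge> c|x|^(\<alpha>-n), hence a lower bound for u that is
  compatible with u \<le> C|x|^-\<theta>, \<theta> > A, only if pA < n. Then some \<theta>' \<in> (A, \<theta>] with
  p\<theta>' < n yields v \<le> C'|x|^-(p\<theta>'-\<alpha>) where p\<theta>' - \<alpha> > B, and since A r0 = B s0 = n,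
  these bounds put u in L^r0 and v in L^s0.
\<close>

lemma powr_bounds_within_factor_2:
  fixes s t e :: real
  assumes "0 < t" "t \<le> s" "s \<le> 2 * t"
  shows "min 1 (2 powr e) * t powr e \<le> s powr e" "s powr e \<le> max 1 (2 powr e) * t powr e"
proof -
  have "(2 * t) powr e = 2 powr e * t powr e" by (simp add: powr_mult)
  then have "t powr e \<le> s powr e \<and> s powr e \<le> 2 powr e * t powr e \<or>
      2 powr e * t powr e \<le> s powr e \<and> s powr e \<le> t powr e"
    using assms powr_mono2[of e t s] powr_mono2[of e s "2 * t"]
      powr_mono2'[of e t s] powr_mono2'[of e s "2 * t"] by (cases "e \<ge> 0") auto
  moreover have "min 1 (2 powr e) * t powr e \<le> t powr e" "min 1 (2 powr e) * t powr e \<le> 2 powr e * t powr e"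
    "t powr e \<le> max 1 (2 powr e) * t powr e" "2 powr e * t powr e \<le> max 1 (2 powr e) * t powr e"
    using mult_right_mono[of "min 1 (2 powr e)" 1 "t powr e"] mult_right_mono[of 1 "max 1 (2 powr e)" "t powr e"]
    by (simp_all add: mult_right_mono)
  ultimately show "min 1 (2 powr e) * t powr e \<le> s powr e" "s powr e \<le> max 1 (2 powr e) * t powr e"
    by linarith+
qed

lemma exists_pow2_bracket:
  fixes x :: real
  assumes "1 \<le> x"
  obtains k :: nat where "2 ^ k \<le> x" "x \<le> 2 ^ Suc k"
proof -
  define k where "k = nat \<lfloor>log 2 x\<rfloor>"
  have "\<lfloor>log 2 x\<rfloor> = int k" using assms by (simp add: k_def)
  then have "2 powr real k \<le> x \<and> x < 2 powr (real k + 1)"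
    using assms floor_log_eq_powr_iff[of x 2 "int k"] by simp
  then show thesis
    using that[of k] by (simp add: powr_realpow[symmetric] powr_add)
qed

lemma bounded_range_powr:
  fixes f :: "'a \<Rightarrow> real"
  assumes "bounded (range f)" "\<And>x. 0 \<le> f x" "0 < p"
  shows "bounded (range (\<lambda>x. f x powr p))"
proof -
  obtain M where M: "\<And>x. norm (f x) \<le> M" using assms(1) by (auto simp: bounded_iff)
  have "norm (f x powr p) \<le> M powr p" for x
  proof -
    have "f x \<le> M" using M[of x] by (simp add: abs_le_iff)
    then show ?thesis using assms(2)[of x] assms(3) by (simp add: powr_mono2)
  qed
  then show ?thesis unfolding bounded_iff by blast
qed

section \<open>Power-law bounds at infinity\<close>

definition decays_at_most :: "('a::real_normed_vector \<Rightarrow> real) \<Rightarrow> real \<Rightarrow> bool" where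
  "decays_at_most f \<theta> \<longleftrightarrow> (\<exists>c>0. \<forall>\<^sub>F x in at_infinity. c * norm x powr (-\<theta>) \<le> f x)"

definition decays_at_least :: "('a::real_normed_vector \<Rightarrow> real) \<Rightarrow> real \<Rightarrow> bool" where
  "decays_at_least f \<theta> \<longleftrightarrow> (\<exists>C>0. \<forall>\<^sub>F x in at_infinity. f x \<le> C * norm x powr (-\<theta>))"

lemma eventually_at_infinity_norm_ge: "\<forall>\<^sub>F x in at_infinity. R \<le> norm x"
  by (auto simp: eventually_at_infinity)

lemma eventually_at_infinity_norm_powr_gt:
  fixes K e :: real
  assumes "0 < e"
  shows "\<forall>\<^sub>F x::'a::real_normed_vector in at_infinity. K < norm x powr e"
proof -
  define b where "b = (\<bar>K\<bar> + 1) powr (1 / e)"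
  have "K < norm x powr e" if "b \<le> norm x" for x :: 'a
  proof -
    have "K < b powr e" using assms by (simp add: b_def powr_powr)
    also have "\<dots> \<le> norm x powr e" using assms that by (intro powr_mono2) (auto simp: b_def)
    finally show ?thesis .
  qed
  then show ?thesis by (auto simp: eventually_at_infinity)
qed

lemma at_infinity_euclidean_neq_bot: "(at_infinity :: 'a::euclidean_space filter) \<noteq> bot"
proof
  assume "(at_infinity :: 'a filter) = bot"
  then obtain b where "\<And>x::'a. b \<le> norm x \<Longrightarrow> False"
    using eventually_at_infinity[of "\<lambda>_. False"] by auto
  moreover obtain x :: 'a where "norm x = \<bar>b\<bar>" using vector_choose_size[of "\<bar>b\<bar>"] by auto
  ultimately show False by (metis abs_ge_self)
qed

lemma decays_at_most_at_least_le:
  fixes f :: "'a::euclidean_space \<Rightarrow> real"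
  assumes "decays_at_most f \<theta>" "decays_at_least f \<theta>'"
  shows "\<theta>' \<le> \<theta>"
proof (rule ccontr)
  assume "\<not> \<theta>' \<le> \<theta>"
  obtain c where c: "c > 0" "\<forall>\<^sub>F x in at_infinity. c * norm x powr (-\<theta>) \<le> f x"
    using assms(1) by (auto simp: decays_at_most_def)
  obtain C where C: "C > 0" "\<forall>\<^sub>F x in at_infinity. f x \<le> C * norm x powr (-\<theta>')"
    using assms(2) by (auto simp: decays_at_least_def)
  have "\<forall>\<^sub>F x::'a in at_infinity. C / c < norm x powr (\<theta>' - \<theta>)"
    using \<open>\<not> \<theta>' \<le> \<theta>\<close> by (intro eventually_at_infinity_norm_powr_gt) simp
  with c(2) C(2) eventually_at_infinity_norm_ge[of 1]
  have "\<forall>\<^sub>F x::'a in at_infinity. False"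
  proof eventually_elim
    case (elim x)
    have "norm x powr (\<theta>' - \<theta>) * norm x powr (-\<theta>') = norm x powr (-\<theta>)"
      by (simp add: powr_add[symmetric])
    then have "c * norm x powr (\<theta>' - \<theta>) * norm x powr (-\<theta>') \<le> C * norm x powr (-\<theta>')"
      using elim by (simp add: mult.assoc)
    moreover have "0 < norm x powr (-\<theta>')" using elim by auto
    ultimately have "c * norm x powr (\<theta>' - \<theta>) \<le> C" by (simp add: mult_le_cancel_right_pos)
    then show False using elim c(1) by (simp add: field_simps)
  qed
  then show False using at_infinity_euclidean_neq_bot[where 'a='a] by (simp add: eventually_False)
qed

lemma bounded_imp_decays_at_least_0:
  assumes "bounded (range f)"
  shows "decays_at_least f 0"
proof -
  obtain M where M: "\<And>x. norm (f x) \<le> M" using assms by (auto simp: bounded_iff)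
  have bound: "f x \<le> max M 1 * norm x powr (-0)" if "1 \<le> norm x" for x
    using M[of x] that by auto
  have "\<forall>\<^sub>F x in at_infinity. f x \<le> max M 1 * norm x powr (-0)"
    by (rule eventually_mono[OF eventually_at_infinity_norm_ge[of 1]]) (rule bound)
  then show ?thesis unfolding decays_at_least_def by (intro exI[of _ "max M 1"]) auto
qed

lemma decays_at_least_mono:
  assumes "decays_at_least f \<theta>" "\<theta>' \<le> \<theta>"
  shows "decays_at_least f \<theta>'"
proof -
  obtain C where C: "C > 0" "\<forall>\<^sub>F x in at_infinity. f x \<le> C * norm x powr (-\<theta>)"
    using assms(1) by (auto simp: decays_at_least_def)
  from C(2) eventually_at_infinity_norm_ge[of 1]
  have "\<forall>\<^sub>F x in at_infinity. f x \<le> C * norm x powr (-\<theta>')"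
  proof eventually_elim
    case (elim x)
    have "norm x powr (-\<theta>) \<le> norm x powr (-\<theta>')" using elim assms(2) by (intro powr_mono) auto
    then have "C * norm x powr (-\<theta>) \<le> C * norm x powr (-\<theta>')" using C(1) by simp
    then show ?case using elim by linarith
  qed
  then show ?thesis using C(1) by (auto simp: decays_at_least_def)
qed

lemma decays_at_most_powr:
  assumes "decays_at_most f \<theta>" "0 < p"
  shows "decays_at_most (\<lambda>x. f x powr p) (p * \<theta>)"
proof -
  obtain c where c: "c > 0" "\<forall>\<^sub>F x in at_infinity. c * norm x powr (-\<theta>) \<le> f x"
    using assms(1) by (auto simp: decays_at_most_def)
  from c(2) have "\<forall>\<^sub>F x in at_infinity. c powr p * norm x powr (-(p * \<theta>)) \<le> f x powr p"
  proof eventually_elim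
    case (elim x)
    have "(c * norm x powr (-\<theta>)) powr p \<le> f x powr p"
      using elim c(1) assms(2) by (intro powr_mono2) auto
    then show ?case using c(1) by (simp add: powr_mult powr_powr mult.commute)
  qed
  then show ?thesis unfolding decays_at_most_def using c(1) by (intro exI[of _ "c powr p"]) auto
qed

lemma decays_at_least_powr:
  assumes "decays_at_least f \<theta>" "0 < p" "\<And>x. 0 \<le> f x"
  shows "decays_at_least (\<lambda>x. f x powr p) (p * \<theta>)"
proof -
  obtain C where C: "C > 0" "\<forall>\<^sub>F x in at_infinity. f x \<le> C * norm x powr (-\<theta>)"
    using assms(1) by (auto simp: decays_at_least_def)
  from C(2) have "\<forall>\<^sub>F x in at_infinity. f x powr p \<le> C powr p * norm x powr (-(p * \<theta>))"
  proof eventually_elim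
    case (elim x)
    have "f x powr p \<le> (C * norm x powr (-\<theta>)) powr p"
      using elim assms(2,3) by (intro powr_mono2) auto
    then show ?case using C(1) by (simp add: powr_mult powr_powr mult.commute)
  qed
  then show ?thesis unfolding decays_at_least_def using C(1) by (intro exI[of _ "C powr p"]) auto
qed

lemma decays_at_least_global_bound:
  fixes g :: "'a::real_normed_vector \<Rightarrow> real"
  assumes g: "decays_at_least g \<beta>" "bounded (range g)" and \<beta>: "0 \<le> \<beta>"
  obtains K where "0 < K" "\<And>y. y \<noteq> 0 \<Longrightarrow> g y \<le> K * norm y powr (-\<beta>)"
proof -
  obtain C b where C: "0 < C" "\<And>y. b \<le> norm y \<Longrightarrow> g y \<le> C * norm y powr (-\<beta>)"
    using g(1) by (auto simp: decays_at_least_def eventually_at_infinity)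
  obtain M where M: "\<And>y. norm (g y) \<le> M" using g(2) by (auto simp: bounded_iff)
  define R where "R = max b 1"
  define K where "K = max C (M * R powr \<beta>)"
  show thesis
  proof
    show "0 < K" using C by (simp add: K_def)
    fix y :: 'a assume "y \<noteq> 0"
    show "g y \<le> K * norm y powr (-\<beta>)"
    proof (cases "R \<le> norm y")
      case True
      then have "g y \<le> C * norm y powr (-\<beta>)" using C by (simp add: R_def)
      also have "\<dots> \<le> K * norm y powr (-\<beta>)" by (intro mult_right_mono) (auto simp: K_def)
      finally show ?thesis .
    next
      case False
      have M0: "0 \<le> M" using norm_ge_zero[of "g y"] M[of y] by linarith
      have "g y \<le> M * R powr \<beta> * R powr (-\<beta>)"
        using M[of y] by (simp add: R_def powr_minus field_simps)
      also have "\<dots> \<le> M * R powr \<beta> * norm y powr (-\<beta>)"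
        using False \<open>y \<noteq> 0\<close> \<beta> M0 by (intro mult_left_mono powr_mono2') auto
      also have "\<dots> \<le> K * norm y powr (-\<beta>)" by (intro mult_right_mono) (auto simp: K_def)
      finally show ?thesis .
    qed
  qed
qed

lemma decays_at_most_of_one_plus_norm:
  assumes "\<exists>C>0. \<exists>R. \<forall>x. norm x \<ge> R \<longrightarrow> f x \<ge> C * (1 + norm x) powr (- \<theta>)"
  shows "decays_at_most f \<theta>"
proof -
  obtain C R where C: "0 < C" "\<And>x. R \<le> norm x \<Longrightarrow> C * (1 + norm x) powr (-\<theta>) \<le> f x"
    using assms by auto
  define m where "m = min 1 (2 powr (-\<theta>))"
  have "C * m * norm x powr (-\<theta>) \<le> f x" if "max R 1 \<le> norm x" for x
  proof -
    have "1 \<le> norm x" using that by simp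
    then have "0 < norm x" "norm x \<le> 1 + norm x" "1 + norm x \<le> 2 * norm x" by linarith+
    from powr_bounds_within_factor_2(1)[OF this, of "-\<theta>"]
    have "m * norm x powr (-\<theta>) \<le> (1 + norm x) powr (-\<theta>)" by (simp add: m_def)
    then have "C * (m * norm x powr (-\<theta>)) \<le> C * (1 + norm x) powr (-\<theta>)" using C(1) by simp
    moreover have "C * (1 + norm x) powr (-\<theta>) \<le> f x" using C(2) that by simp
    ultimately show ?thesis unfolding mult.assoc by linarith
  qed
  then have "\<forall>\<^sub>F x in at_infinity. C * m * norm x powr (-\<theta>) \<le> f x"
    unfolding eventually_at_infinity by blast
  then show ?thesis unfolding decays_at_most_def using C(1) by (intro exI[of _ "C * m"]) (simp add: m_def)
qed

lemma decays_at_least_of_one_plus_norm: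
  assumes "\<exists>C>0. \<exists>R. \<forall>x. norm x \<ge> R \<longrightarrow> f x \<le> C * (1 + norm x) powr (- \<theta>)"
  shows "decays_at_least f \<theta>"
proof -
  obtain C R where C: "0 < C" "\<And>x. R \<le> norm x \<Longrightarrow> f x \<le> C * (1 + norm x) powr (-\<theta>)"
    using assms by auto
  define M where "M = max 1 (2 powr (-\<theta>))"
  have "f x \<le> C * M * norm x powr (-\<theta>)" if "max R 1 \<le> norm x" for x
  proof -
    have "1 \<le> norm x" using that by simp
    then have "0 < norm x" "norm x \<le> 1 + norm x" "1 + norm x \<le> 2 * norm x" by linarith+
    from powr_bounds_within_factor_2(2)[OF this, of "-\<theta>"]
    have "(1 + norm x) powr (-\<theta>) \<le> M * norm x powr (-\<theta>)" by (simp add: M_def)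
    then have "C * (1 + norm x) powr (-\<theta>) \<le> C * (M * norm x powr (-\<theta>))" using C(1) by simp
    moreover have "f x \<le> C * (1 + norm x) powr (-\<theta>)" using C(2) that by simp
    ultimately show ?thesis unfolding mult.assoc by linarith
  qed
  then have "\<forall>\<^sub>F x in at_infinity. f x \<le> C * M * norm x powr (-\<theta>)"
    unfolding eventually_at_infinity by blast
  then show ?thesis unfolding decays_at_least_def using C(1) by (intro exI[of _ "C * M"]) (simp add: M_def)
qed

section \<open>Integrals of powers of the norm\<close>

lemma pred_mem_ball [measurable]: "Measurable.pred borel (\<lambda>z. z \<in> ball c r)"
  unfolding pred_def by (simp del: mem_ball)

lemma ennreal_mult_indicator:
  "0 \<le> c \<Longrightarrow> 0 \<le> f \<Longrightarrow> ennreal (c * (f * indicator S y)) = ennreal c * (ennreal f * indicator S y)"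
  by (simp add: indicator_def ennreal_mult)

lemma nn_integral_lborel_translate:
  fixes f :: "'a::euclidean_space \<Rightarrow> ennreal"
  assumes "f \<in> borel_measurable borel"
  shows "(\<integral>\<^sup>+y. f (x + y) \<partial>lborel) = (\<integral>\<^sup>+y. f y \<partial>lborel)"
proof -
  have "(\<integral>\<^sup>+y. f y \<partial>lborel) = (\<integral>\<^sup>+y. f y \<partial>distr lborel borel ((+) x))"
    by (simp add: lborel_distr_plus)
  also have "\<dots> = (\<integral>\<^sup>+y. f (x + y) \<partial>lborel)"
    using assms by (subst nn_integral_distr) auto
  finally show ?thesis ..
qed

lemma nn_integral_ball_neq_0:
  fixes g :: "'a::euclidean_space \<Rightarrow> real"
  assumes g: "g \<in> borel_measurable lborel" "\<And>y. 0 < g y" and r: "0 < r"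
  shows "(\<integral>\<^sup>+y\<in>ball c r. ennreal (g y) \<partial>lborel) \<noteq> 0"
proof
  assume "(\<integral>\<^sup>+y\<in>ball c r. ennreal (g y) \<partial>lborel) = 0"
  moreover have "(\<lambda>y. ennreal (g y) * indicator (ball c r) y) \<in> borel_measurable lborel"
    using g(1) by measurable
  ultimately have "AE y in lborel. ennreal (g y) * indicator (ball c r) y = 0"
    by (simp add: nn_integral_0_iff_AE)
  then have "AE y in lborel. y \<notin> ball c r"
    using g(2) by (auto elim!: eventually_mono simp: indicator_def ennreal_eq_0_iff not_less[symmetric])
  then have "ball c r \<in> null_sets lborel" by (simp add: AE_iff_null_sets del: mem_ball)
  then show False using unit_ball_vol_pos[of "real DIM('a)"] r by (simp add: null_sets_def emeasure_ball)
qed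

lemma dyadic_shell_term_eq:
  fixes a b g w :: real and N :: nat
  assumes "0 < a" "0 < b"
  shows "(a * b ^ k / 2) powr (-g) * (w * (a * b ^ k) ^ N)
    = w * 2 powr g * a powr (N - g) * (b powr (N - g)) ^ k"
proof -
  have "(a * b ^ k / 2) powr (-g) * (a * b ^ k) ^ N = 2 powr g * (a * b ^ k) powr (N - g)"
    using assms by (simp add: powr_divide powr_minus_divide powr_realpow[symmetric] powr_diff)
  also have "(a * b ^ k) powr (N - g) = a powr (N - g) * (b powr (N - g)) ^ k"
    using assms by (simp add: powr_mult powr_realpow[symmetric] powr_powr powr_power mult.commute)
  finally show ?thesis by (simp add: mult_ac)
qed

lemma nn_integral_suminf_cmult_cball:
  fixes c \<rho> :: "nat \<Rightarrow> real"
  assumes "\<And>k. 0 \<le> c k" "\<And>k. 0 \<le> \<rho> k"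
  shows "(\<integral>\<^sup>+z. (\<Sum>k. ennreal (c k) * indicator (cball (0::'a::euclidean_space) (\<rho> k)) z) \<partial>lborel)
    = (\<Sum>k. ennreal (c k * (unit_ball_vol DIM('a) * \<rho> k ^ DIM('a))))"
proof -
  have "(\<integral>\<^sup>+z. (\<Sum>k. ennreal (c k) * indicator (cball (0::'a) (\<rho> k)) z) \<partial>lborel)
      = (\<Sum>k. \<integral>\<^sup>+z. ennreal (c k) * indicator (cball (0::'a) (\<rho> k)) z \<partial>lborel)"
    by (intro nn_integral_suminf borel_measurable_times_ennreal borel_measurable_const
        borel_measurable_indicator) simp
  also have "\<dots> = (\<Sum>k. ennreal (c k * (unit_ball_vol DIM('a) * \<rho> k ^ DIM('a))))"
    using assms by (simp add: nn_integral_cmult_indicator emeasure_cball ennreal_mult')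
  finally show ?thesis .
qed

text \<open>On the shell \<rho>/2 \<le> |z| \<le> \<rho> the weight |z|^-g is at most (\<rho>/2)^-g; with
  \<rho> = a b^k the resulting ball volumes sum geometrically.\<close>

lemma nn_integral_norm_powr_dyadic_le:
  fixes S :: "'a::euclidean_space set" and a b g :: real
  defines "N \<equiv> real DIM('a)"
  assumes g: "0 \<le> g" and ab: "0 < a" "0 < b" "b powr (N - g) < 1"
    and cover: "\<And>z. z \<in> S \<Longrightarrow> z \<noteq> 0 \<Longrightarrow> \<exists>k. a * b ^ k / 2 \<le> norm z \<and> norm z \<le> a * b ^ k"
  shows "(\<integral>\<^sup>+z\<in>S. ennreal (norm z powr (-g)) \<partial>lborel)
    \<le> ennreal (unit_ball_vol N * 2 powr g * a powr (N - g) / (1 - b powr (N - g)))"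
proof -
  define \<rho> where "\<rho> k = a * b ^ k" for k
  define C where "C = unit_ball_vol N * 2 powr g * a powr (N - g)"
  have \<rho>: "0 < \<rho> k" for k using ab by (simp add: \<rho>_def)
  have "ennreal (norm z powr (-g)) * indicator S z
      \<le> (\<Sum>k. ennreal ((\<rho> k / 2) powr (-g)) * indicator (cball 0 (\<rho> k)) z)" for z :: 'a
  proof (cases "z \<in> S \<and> z \<noteq> 0")
    case True
    then obtain k where k: "\<rho> k / 2 \<le> norm z" "norm z \<le> \<rho> k" using cover by (auto simp: \<rho>_def)
    have "norm z powr (-g) \<le> (\<rho> k / 2) powr (-g)"
      using k \<rho>[of k] g by (intro powr_mono2') auto
    then have "ennreal (norm z powr (-g)) * indicator S z
        \<le> ennreal ((\<rho> k / 2) powr (-g)) * indicator (cball 0 (\<rho> k)) z"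
      using True k by (auto intro: ennreal_leI)
    also have "\<dots> \<le> (\<Sum>k. ennreal ((\<rho> k / 2) powr (-g)) * indicator (cball 0 (\<rho> k)) z)"
      by (rule sum_le_suminf[of _ "{k}", simplified]) (auto intro: summableI)
    finally show ?thesis .
  qed (auto simp: indicator_def)
  then have "(\<integral>\<^sup>+z\<in>S. ennreal (norm z powr (-g)) \<partial>lborel)
      \<le> (\<integral>\<^sup>+z. (\<Sum>k. ennreal ((\<rho> k / 2) powr (-g)) * indicator (cball (0::'a) (\<rho> k)) z) \<partial>lborel)"
    by (intro nn_integral_mono)
  also have "\<dots> = (\<Sum>k. ennreal ((\<rho> k / 2) powr (-g) * (unit_ball_vol N * \<rho> k ^ DIM('a))))"
    using \<rho> by (simp add: nn_integral_suminf_cmult_cball less_imp_le N_def)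
  also have "\<dots> = (\<Sum>k. ennreal (C * (b powr (N - g)) ^ k))"
    unfolding \<rho>_def C_def dyadic_shell_term_eq[OF ab(1,2)] by (simp add: N_def)
  also have "\<dots> = ennreal (C / (1 - b powr (N - g)))"
  proof (rule suminf_ennreal_eq)
    have "(\<lambda>k. (b powr (N - g)) ^ k) sums (1 / (1 - b powr (N - g)))"
      using ab(3) by (intro geometric_sums) simp
    from sums_mult[OF this, of C] show "(\<lambda>k. C * (b powr (N - g)) ^ k) sums (C / (1 - b powr (N - g)))"
      by simp
  qed (simp add: C_def N_def)
  finally show ?thesis by (simp add: C_def)
qed

lemma nn_integral_ball_norm_powr_le:
  fixes g :: real
  assumes g: "0 \<le> g" "g < DIM('a)"
  obtains K where "0 < K" and "\<And>r. 0 < r \<Longrightarrow>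
    (\<integral>\<^sup>+z\<in>ball (0::'a::euclidean_space) r. ennreal (norm z powr (-g)) \<partial>lborel) \<le> ennreal (K * r powr (DIM('a) - g))"
proof
  define q where "q = (1/2 :: real) powr (DIM('a) - g)"
  have q: "q < 1" using powr_less_mono'[of "1/2" 0 "DIM('a) - g"] g by (simp add: q_def)
  show "0 < unit_ball_vol DIM('a) * 2 powr g / (1 - q)" using q by simp
  fix r :: real assume r: "0 < r"
  have cover: "\<exists>k. r * (1/2) ^ k / 2 \<le> norm z \<and> norm z \<le> r * (1/2) ^ k" if "z \<in> ball 0 r" "z \<noteq> 0" for z :: 'a
  proof -
    have "1 \<le> r / norm z" using that by simp
    then obtain k where "2 ^ k \<le> r / norm z" "r / norm z \<le> 2 ^ Suc k" by (rule exists_pow2_bracket)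
    then show ?thesis using that by (intro exI[of _ k]) (simp add: field_simps power_one_over)
  qed
  from nn_integral_norm_powr_dyadic_le[where 'a='a, of g r "1/2" "ball 0 r", folded q_def, OF g(1) r _ q cover]
  show "(\<integral>\<^sup>+z\<in>ball (0::'a) r. ennreal (norm z powr (-g)) \<partial>lborel)
      \<le> ennreal (unit_ball_vol DIM('a) * 2 powr g / (1 - q) * r powr (DIM('a) - g))"
    by (simp add: field_simps)
qed

lemma nn_integral_outside_ball_norm_powr_le:
  fixes g :: real
  assumes g: "DIM('a) < g"
  obtains K where "0 < K" and "\<And>r. 0 < r \<Longrightarrow>
    (\<integral>\<^sup>+z\<in>-ball (0::'a::euclidean_space) r. ennreal (norm z powr (-g)) \<partial>lborel) \<le> ennreal (K * r powr (DIM('a) - g))"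
proof
  define q where "q = (2 :: real) powr (DIM('a) - g)"
  have q: "q < 1" using g by (simp add: q_def powr_less_one)
  show "0 < unit_ball_vol DIM('a) * 2 powr g * q / (1 - q)" using q by (simp add: q_def)
  fix r :: real assume r: "0 < r"
  have cover: "\<exists>k. 2 * r * 2 ^ k / 2 \<le> norm z \<and> norm z \<le> 2 * r * 2 ^ k" if "z \<in> - ball 0 r" for z :: 'a
  proof -
    have "1 \<le> norm z / r" using that r by simp
    then obtain k where "2 ^ k \<le> norm z / r" "norm z / r \<le> 2 ^ Suc k" by (rule exists_pow2_bracket)
    then show ?thesis using r by (intro exI[of _ k]) (simp add: field_simps)
  qed
  have "(\<integral>\<^sup>+z\<in>-ball (0::'a) r. ennreal (norm z powr (-g)) \<partial>lborel)
      \<le> ennreal (unit_ball_vol DIM('a) * 2 powr g * (2 * r) powr (DIM('a) - g) / (1 - q))"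
    using nn_integral_norm_powr_dyadic_le[where 'a='a, of g "2 * r" 2 "- ball 0 r", folded q_def] g q r cover
    by simp
  then show "(\<integral>\<^sup>+z\<in>-ball (0::'a) r. ennreal (norm z powr (-g)) \<partial>lborel)
      \<le> ennreal (unit_ball_vol DIM('a) * 2 powr g * q / (1 - q) * r powr (DIM('a) - g))"
    using r by (simp add: q_def powr_mult field_simps)
qed

text \<open>Split according to whether y is near 0, near x, or far from both; far from both,
  |x - y| \<ge> |y|/3.\<close>

lemma norm_powr_product_split:
  fixes x y :: "'a::real_normed_vector" and \<beta> \<gamma> s :: real
  assumes "0 \<le> \<beta>" "0 \<le> \<gamma>" "norm x = 2 * s" "0 < s"
  shows "norm y powr (-\<beta>) * norm (x - y) powr (-\<gamma>) \<le>
      s powr (-\<gamma>) * (norm y powr (-\<beta>) * indicator (ball 0 s) y)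
    + s powr (-\<beta>) * (norm (x - y) powr (-\<gamma>) * indicator (ball x s) y)
    + 3 powr \<gamma> * (norm y powr (-(\<beta> + \<gamma>)) * indicator (- ball 0 s) y)"
    (is "?lhs \<le> ?near0 + ?nearx + ?far")
proof -
  have terms: "0 \<le> ?near0" "0 \<le> ?nearx" "0 \<le> ?far" by simp_all
  consider "norm y < s" | "s \<le> norm y" "norm (x - y) < s" | "s \<le> norm y" "s \<le> norm (x - y)"
    by linarith
  then show ?thesis
  proof cases
    case 1
    have "s \<le> norm (x - y)" using norm_triangle_ineq2[of x y] 1 assms(3) by linarith
    then have "norm (x - y) powr (-\<gamma>) \<le> s powr (-\<gamma>)" using assms by (intro powr_mono2') auto
    from mult_left_mono[OF this, of "norm y powr (-\<beta>)"]
    have "?lhs \<le> ?near0" using 1 by (simp add: mult.commute)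
    then show ?thesis using terms by linarith
  next
    case 2
    have "norm y powr (-\<beta>) \<le> s powr (-\<beta>)" using 2 assms by (intro powr_mono2') auto
    then have "?lhs \<le> ?nearx" using 2 by (simp add: dist_norm mult_right_mono)
    then show ?thesis using terms by linarith
  next
    case 3
    have "norm y \<le> norm x + norm (x - y)" using norm_triangle_sub[of y x] by (simp add: norm_minus_commute)
    then have "norm y / 3 \<le> norm (x - y)" using 3 assms(3) by linarith
    moreover have "0 < norm y / 3" using 3 assms(4) by linarith
    ultimately have "norm (x - y) powr (-\<gamma>) \<le> (norm y / 3) powr (-\<gamma>)"
      using assms(2) by (intro powr_mono2') auto
    also have "\<dots> = 3 powr \<gamma> * norm y powr (-\<gamma>)"
      by (simp add: powr_divide powr_minus_divide)
    finally have "?lhs \<le> norm y powr (-\<beta>) * (3 powr \<gamma> * norm y powr (-\<gamma>))"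
      by (rule mult_left_mono) simp
    also have "\<dots> = 3 powr \<gamma> * norm y powr (-(\<beta> + \<gamma>))"
      by (simp add: powr_add[of _ "-\<beta>" "-\<gamma>", simplified])
    also have "\<dots> = ?far" using 3 by simp
    finally show ?thesis using terms by linarith
  qed
qed

lemma nn_integral_norm_powr_product_split:
  fixes x :: "'a::euclidean_space" and \<beta> \<gamma> s :: real
  assumes \<beta>\<gamma>: "0 \<le> \<beta>" "0 \<le> \<gamma>" and s: "norm x = 2 * s" "0 < s"
  shows "(\<integral>\<^sup>+y. ennreal (norm y powr (-\<beta>) * norm (x - y) powr (-\<gamma>)) \<partial>lborel)
    \<le> ennreal (s powr (-\<gamma>)) * (\<integral>\<^sup>+z\<in>ball (0::'a) s. ennreal (norm z powr (-\<beta>)) \<partial>lborel)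
      + ennreal (s powr (-\<beta>)) * (\<integral>\<^sup>+z\<in>ball (0::'a) s. ennreal (norm z powr (-\<gamma>)) \<partial>lborel)
      + ennreal (3 powr \<gamma>) * (\<integral>\<^sup>+z\<in>-ball (0::'a) s. ennreal (norm z powr (-(\<beta> + \<gamma>))) \<partial>lborel)"
proof -
  define near0 where "near0 y = ennreal (norm y powr (-\<beta>)) * indicator (ball 0 s) y" for y :: 'a
  define nearx where "nearx y = ennreal (norm (x - y) powr (-\<gamma>)) * indicator (ball x s) y" for y :: 'a
  define far where "far y = ennreal (norm y powr (-(\<beta> + \<gamma>))) * indicator (- ball 0 s) y" for y :: 'a
  have [measurable]: "near0 \<in> borel_measurable lborel" "nearx \<in> borel_measurable lborel"
    "far \<in> borel_measurable lborel"
    unfolding near0_def nearx_def far_def by measurable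
  have "ennreal (norm y powr (-\<beta>) * norm (x - y) powr (-\<gamma>))
      \<le> ennreal (s powr (-\<gamma>)) * near0 y + ennreal (s powr (-\<beta>)) * nearx y + ennreal (3 powr \<gamma>) * far y" for y
    using ennreal_leI[OF norm_powr_product_split[OF \<beta>\<gamma> s, of y]]
    by (simp add: near0_def nearx_def far_def ennreal_mult_indicator)
  then have "(\<integral>\<^sup>+y. ennreal (norm y powr (-\<beta>) * norm (x - y) powr (-\<gamma>)) \<partial>lborel)
      \<le> (\<integral>\<^sup>+y. ennreal (s powr (-\<gamma>)) * near0 y + ennreal (s powr (-\<beta>)) * nearx y
          + ennreal (3 powr \<gamma>) * far y \<partial>lborel)"
    by (intro nn_integral_mono)
  also have "\<dots> = ennreal (s powr (-\<gamma>)) * integral\<^sup>N lborel near0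
      + ennreal (s powr (-\<beta>)) * integral\<^sup>N lborel nearx + ennreal (3 powr \<gamma>) * integral\<^sup>N lborel far"
    by (simp add: nn_integral_add nn_integral_cmult)
  also have "integral\<^sup>N lborel nearx = (\<integral>\<^sup>+z. nearx (x + z) \<partial>lborel)"
    by (rule nn_integral_lborel_translate[symmetric]) measurable
  also have "\<dots> = (\<integral>\<^sup>+z\<in>ball (0::'a) s. ennreal (norm z powr (-\<gamma>)) \<partial>lborel)"
    by (simp add: nearx_def indicator_def dist_norm)
  finally show ?thesis by (simp add: near0_def[abs_def] far_def[abs_def])
qed

lemma nn_integral_norm_powr_convolution_le:
  fixes \<beta> \<gamma> :: real
  defines "N \<equiv> real DIM('a::euclidean_space)"
  assumes \<beta>: "0 \<le> \<beta>" "\<beta> < N" and \<gamma>: "0 \<le> \<gamma>" "\<gamma> < N" and \<beta>\<gamma>: "N < \<beta> + \<gamma>"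
  obtains D where "0 < D" and "\<And>x::'a. x \<noteq> 0 \<Longrightarrow>
    (\<integral>\<^sup>+y. ennreal (norm y powr (-\<beta>) * norm (x - y) powr (-\<gamma>)) \<partial>lborel)
      \<le> ennreal (D * norm x powr (N - (\<beta> + \<gamma>)))"
proof -
  obtain K1 where K1: "0 < K1" "\<And>r. 0 < r \<Longrightarrow>
      (\<integral>\<^sup>+z\<in>ball (0::'a) r. ennreal (norm z powr (-\<beta>)) \<partial>lborel) \<le> ennreal (K1 * r powr (N - \<beta>))"
    using nn_integral_ball_norm_powr_le[where 'a='a, of \<beta>] \<beta> unfolding N_def by blast
  obtain K2 where K2: "0 < K2" "\<And>r. 0 < r \<Longrightarrow>
      (\<integral>\<^sup>+z\<in>ball (0::'a) r. ennreal (norm z powr (-\<gamma>)) \<partial>lborel) \<le> ennreal (K2 * r powr (N - \<gamma>))"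
    using nn_integral_ball_norm_powr_le[where 'a='a, of \<gamma>] \<gamma> unfolding N_def by blast
  obtain K3 where K3: "0 < K3" "\<And>r. 0 < r \<Longrightarrow>
      (\<integral>\<^sup>+z\<in>-ball (0::'a) r. ennreal (norm z powr (-(\<beta> + \<gamma>))) \<partial>lborel)
        \<le> ennreal (K3 * r powr (N - (\<beta> + \<gamma>)))"
    using nn_integral_outside_ball_norm_powr_le[where 'a='a, of "\<beta> + \<gamma>"] \<beta>\<gamma> unfolding N_def by blast
  define D where "D = (K1 + K2 + 3 powr \<gamma> * K3) * 2 powr (\<beta> + \<gamma> - N)"
  show thesis
  proof (rule that)
    show "0 < D" using K1 K2 K3 by (simp add: D_def add_pos_pos)
    fix x :: 'a assume "x \<noteq> 0"
    define s where "s = norm x / 2"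
    have s: "norm x = 2 * s" "0 < s" using \<open>x \<noteq> 0\<close> by (simp_all add: s_def)
    note nn_integral_norm_powr_product_split[OF \<beta>(1) \<gamma>(1) s]
    also have "ennreal (s powr (-\<gamma>)) * (\<integral>\<^sup>+z\<in>ball (0::'a) s. ennreal (norm z powr (-\<beta>)) \<partial>lborel)
        + ennreal (s powr (-\<beta>)) * (\<integral>\<^sup>+z\<in>ball (0::'a) s. ennreal (norm z powr (-\<gamma>)) \<partial>lborel)
        + ennreal (3 powr \<gamma>) * (\<integral>\<^sup>+z\<in>-ball (0::'a) s. ennreal (norm z powr (-(\<beta> + \<gamma>))) \<partial>lborel)
      \<le> ennreal (s powr (-\<gamma>)) * ennreal (K1 * s powr (N - \<beta>))
        + ennreal (s powr (-\<beta>)) * ennreal (K2 * s powr (N - \<gamma>))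
        + ennreal (3 powr \<gamma>) * ennreal (K3 * s powr (N - (\<beta> + \<gamma>)))"
      by (intro add_mono mult_left_mono K1(2) K2(2) K3(2) s(2)) simp_all
    also have "\<dots> = ennreal ((K1 + K2 + 3 powr \<gamma> * K3) * s powr (N - (\<beta> + \<gamma>)))"
      using K1(1) K2(1) K3(1)
      by (simp add: ennreal_mult'[symmetric] ennreal_plus[symmetric] powr_add[symmetric] algebra_simps
          del: ennreal_plus)
    also have "\<dots> = ennreal (D * norm x powr (N - (\<beta> + \<gamma>)))"
      by (simp add: D_def s_def powr_divide powr_minus_divide powr_diff mult_ac)
    finally show "(\<integral>\<^sup>+y. ennreal (norm y powr (-\<beta>) * norm (x - y) powr (-\<gamma>)) \<partial>lborel)
      \<le> ennreal (D * norm x powr (N - (\<beta> + \<gamma>)))" .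
  qed
qed

section \<open>Decay of Riesz potentials\<close>

lemma ball_three_halves_norm_bounds:
  fixes x y :: "'a::real_normed_vector"
  assumes "y \<in> ball ((3/2) *\<^sub>R x) (norm x / 2)"
  shows "norm x \<le> norm y" "norm y \<le> 2 * norm x" "0 < norm (x - y)" "norm (x - y) \<le> norm x"
proof -
  define c where "c = (3/2) *\<^sub>R x"
  have cy: "norm (c - y) < norm x / 2" using assms by (simp add: c_def dist_norm)
  have nc: "norm c = 3/2 * norm x" by (simp add: c_def)
  have xc: "norm (x - c) = norm x / 2"
  proof -
    have "x - c = (1 - 3/2) *\<^sub>R x" unfolding c_def by (simp only: scaleR_left_diff_distrib scaleR_one)
    then show ?thesis by simp
  qed
  show "norm x \<le> norm y" using norm_triangle_ineq2[of c y] cy nc by linarith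
  show "norm y \<le> 2 * norm x" using norm_triangle_sub[of y c] cy nc by (simp add: norm_minus_commute)
  show "norm (x - y) \<le> norm x" using norm_triangle_ineq[of "x - c" "c - y"] cy xc by simp
  have "norm (x - c) - norm (y - c) \<le> norm (x - y)" using norm_triangle_ineq2[of "x - c" "y - c"] by simp
  then show "0 < norm (x - y)" using cy xc norm_minus_commute[of y c] by linarith
qed

text \<open>Only the ball B(3x/2, |x|/2) is used: there |y| is comparable to |x| and
  0 < |x - y| \<le> |x|.\<close>

lemma riesz_pot_decays_at_most:
  fixes g h :: "real^'n \<Rightarrow> real"
  defines "N \<equiv> real CARD('n)"
  assumes g: "decays_at_most g \<beta>" and \<alpha>: "\<alpha> < N"
    and pot: "\<And>x. riesz_pot \<alpha> g x = ennreal (h x)"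
  shows "decays_at_most h (\<beta> - \<alpha>)"
proof -
  obtain c R where c: "0 < c" and R: "\<And>y. R \<le> norm y \<Longrightarrow> c * norm y powr (-\<beta>) \<le> g y"
    using g by (auto simp: decays_at_most_def eventually_at_infinity)
  define m where "m = min 1 (2 powr (-\<beta>))"
  define c' where "c' = c * m * unit_ball_vol N / 2 ^ CARD('n)"
  have m: "0 < m" by (simp add: m_def)
  have lower: "c' * norm x powr (-(\<beta> - \<alpha>)) \<le> h x" if x: "max R 1 \<le> norm x" for x :: "real^'n"
  proof -
    define t where "t = norm x"
    have "1 \<le> norm x" using x by simp
    then have t: "0 < t" unfolding t_def by linarith
    define K where "K = c * m * t powr (-\<beta>) / t powr (N - \<alpha>)"
    have K: "K \<le> g y / norm (x - y) powr (N - \<alpha>)" if y: "y \<in> ball ((3/2) *\<^sub>R x) (t / 2)" for y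
    proof -
      note bounds = ball_three_halves_norm_bounds[OF y[unfolded t_def]]
      have "c * (m * t powr (-\<beta>)) \<le> c * norm y powr (-\<beta>)"
        using powr_bounds_within_factor_2(1)[of t "norm y" "-\<beta>"] bounds c t by (simp add: m_def t_def)
      also have "\<dots> \<le> g y" using R bounds x by (simp add: t_def)
      finally have num: "c * m * t powr (-\<beta>) \<le> g y" by (simp add: mult.assoc)
      have den: "norm (x - y) powr (N - \<alpha>) \<le> t powr (N - \<alpha>)"
        using bounds \<alpha> by (intro powr_mono2) (auto simp: t_def)
      have "0 \<le> c * m * t powr (-\<beta>)" using c m by simp
      then show ?thesis unfolding K_def using num den bounds(3) by (intro frac_le) auto
    qed
    have "0 \<le> K" using c m by (simp add: K_def)
    with t have "ennreal (K * (unit_ball_vol N * (t / 2) ^ CARD('n)))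
        = (\<integral>\<^sup>+y. ennreal K * indicator (ball ((3/2) *\<^sub>R x) (t / 2)) y \<partial>lborel)"
      by (simp add: nn_integral_cmult_indicator emeasure_ball N_def ennreal_mult')
    also have "\<dots> \<le> (\<integral>\<^sup>+y. ennreal (g y / norm (x - y) powr (N - \<alpha>)) \<partial>lborel)"
      by (intro nn_integral_mono) (auto simp: indicator_def intro!: ennreal_leI K)
    also have "\<dots> = ennreal (h x)" using pot by (simp add: riesz_pot_def N_def)
    moreover have "0 < K * (unit_ball_vol N * (t / 2) ^ CARD('n))" using t c m by (simp add: K_def N_def)
    ultimately have "K * (unit_ball_vol N * (t / 2) ^ CARD('n)) \<le> h x"
      by (auto simp: ennreal_le_iff2)
    moreover have "K * (unit_ball_vol N * (t / 2) ^ CARD('n)) = c' * t powr (-(\<beta> - \<alpha>))"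
      using t by (simp add: K_def c'_def N_def powr_realpow[symmetric] powr_divide powr_diff powr_minus_divide powr_add field_simps)
    ultimately show ?thesis by (simp add: t_def)
  qed
  have "0 < c'" using c m by (simp add: c'_def N_def)
  then show ?thesis unfolding decays_at_most_def eventually_at_infinity using lower by blast
qed

lemma riesz_pot_decays_at_most_dim:
  fixes g h :: "real^'n \<Rightarrow> real"
  defines "N \<equiv> real CARD('n)"
  assumes g: "g \<in> borel_measurable lborel" "\<And>y. 0 < g y" and \<alpha>: "\<alpha> < N"
    and pot: "\<And>x. riesz_pot \<alpha> g x = ennreal (h x)"
  shows "decays_at_most h (N - \<alpha>)"
proof -
  define mass where "mass = (\<integral>\<^sup>+y\<in>ball 0 1. ennreal (g y) \<partial>lborel)"
  have "mass \<noteq> 0" unfolding mass_def using nn_integral_ball_neq_0[OF g] by simp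
  \<comment> \<open>The mass may be infinite; capping it at 1 gives a positive real lower bound.\<close>
  define \<kappa> where "\<kappa> = enn2real (min mass 1)"
  have \<kappa>: "0 < \<kappa>" "ennreal \<kappa> \<le> mass"
    using \<open>mass \<noteq> 0\<close> by (auto simp: \<kappa>_def enn2real_positive_iff min_less_iff_disj zero_less_iff_neq_zero)
  have lower: "\<kappa> * 2 powr (-(N - \<alpha>)) * norm x powr (-(N - \<alpha>)) \<le> h x" if x: "1 \<le> norm x" for x :: "real^'n"
  proof -
    have "x \<noteq> 0" using x by (metis norm_zero not_one_le_zero)
    define w where "w = (2 * norm x) powr (-(N - \<alpha>))"
    have w: "w \<le> 1 / norm (x - y) powr (N - \<alpha>)" if "y \<in> ball 0 1" for y
    proof -
      have "0 < norm (x - y)" "norm (x - y) \<le> 2 * norm x"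
        using that x norm_triangle_ineq2[of x y] norm_triangle_ineq4[of x y] by auto
      then show ?thesis unfolding w_def using \<alpha> by (simp add: powr_minus_divide[symmetric] powr_mono2')
    qed
    have "ennreal (\<kappa> * w) \<le> mass * ennreal w"
      using \<kappa> by (simp add: w_def ennreal_mult mult_right_mono)
    also have "\<dots> = (\<integral>\<^sup>+y. ennreal (g y) * indicator (ball 0 1) y * ennreal w \<partial>lborel)"
      unfolding mass_def by (rule nn_integral_multc[symmetric]) (use g(1) in measurable)
    also have "\<dots> \<le> (\<integral>\<^sup>+y. ennreal (g y / norm (x - y) powr (N - \<alpha>)) \<partial>lborel)"
    proof (intro nn_integral_mono)
      fix y
      show "ennreal (g y) * indicator (ball 0 1) y * ennreal w \<le> ennreal (g y / norm (x - y) powr (N - \<alpha>))"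
        using w[of y] g(2)[of y] mult_left_mono[OF w[of y], of "g y"] powr_ge_zero[of "2 * norm x" "-(N - \<alpha>)"]
        by (auto simp: indicator_def w_def ennreal_mult[symmetric] intro!: ennreal_leI)
    qed
    also have "\<dots> = ennreal (h x)" using pot by (simp add: riesz_pot_def N_def)
    moreover have "0 < \<kappa> * w" unfolding w_def using \<kappa> \<open>x \<noteq> 0\<close> by simp
    ultimately have "\<kappa> * w \<le> h x" by (auto simp: ennreal_le_iff2)
    then show ?thesis by (simp add: w_def powr_mult mult.assoc)
  qed
  have "\<forall>\<^sub>F x in at_infinity. \<kappa> * 2 powr (-(N - \<alpha>)) * norm x powr (-(N - \<alpha>)) \<le> h x"
    using lower by (auto simp: eventually_at_infinity)
  then show ?thesis unfolding decays_at_most_def using \<kappa> by (intro exI[of _ "\<kappa> * 2 powr (-(N - \<alpha>))"]) auto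
qed

lemma riesz_pot_decays_at_least:
  fixes g h :: "real^'n \<Rightarrow> real"
  defines "N \<equiv> real CARD('n)"
  assumes g: "decays_at_least g \<beta>" "bounded (range g)" "\<And>y. 0 \<le> g y"
    and \<alpha>\<beta>: "0 < \<alpha>" "\<alpha> < \<beta>" "\<beta> < N"
    and pot: "\<And>x. riesz_pot \<alpha> g x = ennreal (h x)"
  shows "decays_at_least h (\<beta> - \<alpha>)"
proof -
  obtain K where K: "0 < K" "\<And>y. y \<noteq> 0 \<Longrightarrow> g y \<le> K * norm y powr (-\<beta>)"
    using decays_at_least_global_bound[OF g(1,2)] \<alpha>\<beta> by auto
  obtain D where D: "0 < D" "\<And>x::real^'n. x \<noteq> 0 \<Longrightarrow>
      (\<integral>\<^sup>+y. ennreal (norm y powr (-\<beta>) * norm (x - y) powr (-(N - \<alpha>))) \<partial>lborel)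
        \<le> ennreal (D * norm x powr (N - (\<beta> + (N - \<alpha>))))"
    using nn_integral_norm_powr_convolution_le[where 'a="real^'n", of \<beta> "N - \<alpha>"] \<alpha>\<beta>
    unfolding N_def by auto
  have upper: "h x \<le> K * D * norm x powr (-(\<beta> - \<alpha>))" if "x \<noteq> 0" for x :: "real^'n"
  proof -
    have "ennreal (h x) = (\<integral>\<^sup>+y. ennreal (g y / norm (x - y) powr (N - \<alpha>)) \<partial>lborel)"
      using pot by (simp add: riesz_pot_def N_def)
    also have "\<dots> \<le> (\<integral>\<^sup>+y. ennreal K * ennreal (norm y powr (-\<beta>) * norm (x - y) powr (-(N - \<alpha>))) \<partial>lborel)"
    proof (rule nn_integral_mono_AE)
      show "AE y in lborel. ennreal (g y / norm (x - y) powr (N - \<alpha>))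
          \<le> ennreal K * ennreal (norm y powr (-\<beta>) * norm (x - y) powr (-(N - \<alpha>)))"
        using AE_lborel_singleton[of 0]
      proof eventually_elim
        case (elim y)
        have "g y / norm (x - y) powr (N - \<alpha>) = g y * norm (x - y) powr (-(N - \<alpha>))"
          by (simp only: powr_minus divide_inverse)
        also have "\<dots> \<le> K * norm y powr (-\<beta>) * norm (x - y) powr (-(N - \<alpha>))"
          using K(2)[OF elim] by (intro mult_right_mono) auto
        finally show ?case using K(1) by (simp add: ennreal_mult'[symmetric] mult.assoc ennreal_leI)
      qed
    qed
    also have "\<dots> = ennreal K * (\<integral>\<^sup>+y. ennreal (norm y powr (-\<beta>) * norm (x - y) powr (-(N - \<alpha>))) \<partial>lborel)"
      by (rule nn_integral_cmult) measurable
    also have "\<dots> \<le> ennreal K * ennreal (D * norm x powr (N - (\<beta> + (N - \<alpha>))))"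
      by (intro mult_left_mono D(2) that) simp
    also have "\<dots> = ennreal (K * D * norm x powr (-(\<beta> - \<alpha>)))"
      using K(1) by (simp add: ennreal_mult'[symmetric] mult.assoc)
    finally show ?thesis using K(1) D(1) by (simp add: ennreal_le_iff)
  qed
  have "\<forall>\<^sub>F x in at_infinity. h x \<le> K * D * norm x powr (-(\<beta> - \<alpha>))"
    using eventually_at_infinity_norm_ge[of 1] by eventually_elim (metis upper norm_zero not_one_le_zero)
  then show ?thesis unfolding decays_at_least_def using K(1) D(1) by (intro exI[of _ "K * D"]) auto
qed

lemma in_Lp_if_decays_at_least:
  fixes f :: "real^'n \<Rightarrow> real"
  assumes f: "f \<in> borel_measurable lborel" "bounded (range f)" "\<And>x. 0 \<le> f x" "decays_at_least f \<theta>"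
    and r: "0 < r" "real CARD('n) < \<theta> * r"
  shows "in_Lp r f"
proof -
  have "0 < \<theta> * r" using r(2) of_nat_0_le_iff[of "CARD('n)"] by linarith
  then have \<theta>: "0 \<le> \<theta>" using r(1) by (simp add: zero_less_mult_iff)
  obtain K where K: "0 < K" "\<And>y. y \<noteq> 0 \<Longrightarrow> f y \<le> K * norm y powr (-\<theta>)"
    using decays_at_least_global_bound[OF f(4,2) \<theta>] by blast
  obtain M where M: "\<And>y. norm (f y) \<le> M" using f(2) by (auto simp: bounded_iff)
  obtain K' where K': "\<And>\<rho>. 0 < \<rho> \<Longrightarrow> (\<integral>\<^sup>+z\<in>-ball (0::real^'n) \<rho>. ennreal (norm z powr (-(\<theta> * r))) \<partial>lborel)
      \<le> ennreal (K' * \<rho> powr (DIM(real^'n) - \<theta> * r))"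
    by (rule nn_integral_outside_ball_norm_powr_le[where 'a="real^'n" and g="\<theta> * r"]) (use r in auto)
  define near where "near y = ennreal (M powr r) * indicator (ball 0 1) y" for y :: "real^'n"
  define far where "far y = ennreal (norm y powr (-(\<theta> * r))) * indicator (-ball 0 1) y" for y :: "real^'n"
  have [measurable]: "near \<in> borel_measurable lborel" "far \<in> borel_measurable lborel"
    unfolding near_def far_def by measurable
  have pointwise: "ennreal (\<bar>f y\<bar> powr r) \<le> near y + ennreal (K powr r) * far y" for y
  proof (cases "y \<in> ball 0 1")
    case True
    have "\<bar>f y\<bar> powr r \<le> M powr r" using M[of y] r by (intro powr_mono2) auto
    then show ?thesis using True by (simp add: near_def ennreal_leI add_increasing2)
  next
    case False
    then have "y \<noteq> 0" by auto
    have "\<bar>f y\<bar> powr r \<le> (K * norm y powr (-\<theta>)) powr r"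
      using K(2)[OF \<open>y \<noteq> 0\<close>] f(3)[of y] r by (intro powr_mono2) auto
    also have "\<dots> = K powr r * norm y powr (-(\<theta> * r))"
      using K(1) by (simp add: powr_mult powr_powr)
    finally show ?thesis using False by (simp add: far_def ennreal_leI ennreal_mult'[symmetric] add_increasing)
  qed
  have "(\<integral>\<^sup>+y. ennreal (\<bar>f y\<bar> powr r) \<partial>lborel) \<le> (\<integral>\<^sup>+y. near y + ennreal (K powr r) * far y \<partial>lborel)"
    by (intro nn_integral_mono pointwise)
  also have "\<dots> = ennreal (M powr r) * emeasure lborel (ball (0::real^'n) 1) + ennreal (K powr r) * integral\<^sup>N lborel far"
    by (simp add: nn_integral_add nn_integral_cmult near_def nn_integral_cmult_indicator)
  also have "\<dots> \<le> ennreal (M powr r) * ennreal (unit_ball_vol CARD('n)) + ennreal (K powr r) * ennreal K'"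
    using K'[of 1] by (intro add_mono mult_left_mono) (simp_all add: far_def[abs_def] emeasure_ball)
  also have "\<dots> < \<infinity>" by (simp add: ennreal_mult_less_top)
  finally show ?thesis using f(1) by (simp add: in_Lp_def)
qed

section \<open>The integral system\<close>

lemma pos_bdd_solution_swap: "pos_bdd_solution \<alpha> p q u v \<Longrightarrow> pos_bdd_solution \<alpha> q p v u"
  unfolding pos_bdd_solution_def by auto

lemma pos_bdd_solution_decays_at_most_step:
  fixes \<alpha> p q :: real
  assumes sol: "pos_bdd_solution \<alpha> p q u v" and "\<alpha> < CARD('n)" "0 < p"
    and u: "decays_at_most (u :: real^'n \<Rightarrow> real) \<theta>"
  shows "decays_at_most v (p * \<theta> - \<alpha>)"
  using riesz_pot_decays_at_most[OF decays_at_most_powr[OF u \<open>0 < p\<close>] \<open>\<alpha> < CARD('n)\<close>] sol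
  by (simp add: pos_bdd_solution_def)

lemma pos_bdd_solution_not_decays_at_most:
  fixes u v :: "real^'n \<Rightarrow> real" and \<alpha> p q \<theta> :: real
  assumes \<alpha>: "\<alpha> < CARD('n)" and pq: "0 < p" "0 < q" "1 < p * q"
    and sol: "pos_bdd_solution \<alpha> p q u v"
    and \<theta>: "\<theta> < \<alpha> * (q + 1) / (p * q - 1)"
  shows "\<not> decays_at_most u \<theta>"
proof
  assume u: "decays_at_most u \<theta>"
  define A where "A = \<alpha> * (q + 1) / (p * q - 1)"
  have dA: "(p * q - 1) * A = \<alpha> * (q + 1)" using pq(3) by (simp add: A_def)
  have A: "q * (p * \<phi> - \<alpha>) - \<alpha> = A + p * q * (\<phi> - A)" for \<phi>
  proof -
    have "q * (p * \<phi> - \<alpha>) - \<alpha> - (A + p * q * (\<phi> - A)) = (p * q - 1) * A - \<alpha> * (q + 1)"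
      by (simp add: algebra_simps)
    then show ?thesis using dA by simp
  qed
  have iterate: "decays_at_most u (A + (p * q) ^ k * (\<theta> - A))" for k
  proof (induction k)
    case (Suc k)
    from pos_bdd_solution_decays_at_most_step[OF pos_bdd_solution_swap[OF sol] \<alpha> pq(2)
        pos_bdd_solution_decays_at_most_step[OF sol \<alpha> pq(1) Suc]]
    show ?case by (subst (asm) A) (simp add: algebra_simps)
  qed (simp add: u)
  obtain k where "A / (A - \<theta>) < (p * q) ^ k" using real_arch_pow[of "p * q"] pq(3) by blast
  moreover have "0 < A - \<theta>" using \<theta> by (simp add: A_def)
  ultimately have "A < (p * q) ^ k * (A - \<theta>)" by (simp add: divide_less_eq)
  then have "A + (p * q) ^ k * (\<theta> - A) < 0" by (simp add: right_diff_distrib)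
  moreover have "decays_at_least u 0"
    using sol by (intro bounded_imp_decays_at_least_0) (simp add: pos_bdd_solution_def)
  ultimately show False using decays_at_most_at_least_le[OF iterate[of k]] by fastforce
qed

lemma pos_bdd_solution_decays_at_least_le:
  fixes u v :: "real^'n \<Rightarrow> real" and \<alpha> p q \<theta> :: real
  defines "N \<equiv> real CARD('n)"
  assumes \<alpha>: "\<alpha> < N" and pq: "0 < p" "0 < q"
    and sol: "pos_bdd_solution \<alpha> p q u v" and u: "decays_at_least u \<theta>"
  shows "\<theta> \<le> q * (N - \<alpha>) - \<alpha>"
proof -
  have "u \<in> borel_measurable lborel" "\<And>y. 0 < u y" "\<And>x. riesz_pot \<alpha> (\<lambda>y. u y powr p) x = ennreal (v x)"
    using sol by (auto simp: pos_bdd_solution_def)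
  then have "decays_at_most v (N - \<alpha>)"
    unfolding N_def using \<alpha> by (intro riesz_pot_decays_at_most_dim[of "\<lambda>y. u y powr p"]) (auto simp: N_def less_le)
  then have "decays_at_most u (q * (N - \<alpha>) - \<alpha>)"
    using pos_bdd_solution_decays_at_most_step[OF pos_bdd_solution_swap[OF sol] _ pq(2)] \<alpha>
    by (simp add: N_def)
  then show ?thesis using u by (rule decays_at_most_at_least_le)
qed

lemma pos_bdd_solution_not_decays_at_least:
  fixes u v :: "real^'n \<Rightarrow> real" and \<alpha> p q \<theta> :: real
  defines "N \<equiv> real CARD('n)"
  assumes \<alpha>: "0 < \<alpha>" "\<alpha> < N" and pq: "0 < p" "0 < q" "1 < p * q"
    and sol: "pos_bdd_solution \<alpha> p q u v"
    and not_Lp: "\<not> (in_Lp (N * (p * q - 1) / (\<alpha> * (q + 1))) u \<and> in_Lp (N * (p * q - 1) / (\<alpha> * (p + 1))) v)"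
    and \<theta>: "\<alpha> * (q + 1) / (p * q - 1) < \<theta>"
  shows "\<not> decays_at_least u \<theta>"
proof
  assume u: "decays_at_least u \<theta>"
  define A where "A = \<alpha> * (q + 1) / (p * q - 1)"
  define B where "B = \<alpha> * (p + 1) / (p * q - 1)"
  have "0 < B" using \<alpha> pq by (simp add: B_def)
  have pA: "p * A - \<alpha> = B" and qB: "q * B - \<alpha> = A"
    using pq(3) by (simp_all add: A_def B_def field_simps)
  have um: "u \<in> borel_measurable lborel" and upos: "\<And>y. 0 < u y" and ub: "bounded (range u)"
    and vm: "v \<in> borel_measurable lborel" and vpos: "\<And>y. 0 < v y" and vb: "bounded (range v)"
    and pot_v: "\<And>x. riesz_pot \<alpha> (\<lambda>y. u y powr p) x = ennreal (v x)"
    using sol by (auto simp: pos_bdd_solution_def)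
  have "q * B < q * (N - \<alpha>)"
    using pos_bdd_solution_decays_at_least_le[OF _ pq(1,2) sol u] \<alpha> qB \<theta> by (simp add: N_def A_def)
  then have "B < N - \<alpha>" using pq(2) by simp
  then have "A < N / p" using pA pq(1) by (simp add: field_simps)
  moreover have "A < \<theta>" using \<theta> by (simp add: A_def)
  ultimately obtain \<theta>' where "A < \<theta>'" "\<theta>' < min \<theta> (N / p)" using dense by (metis min_less_iff_conj)
  then have \<theta>': "A < \<theta>'" "\<theta>' \<le> \<theta>" "p * \<theta>' < N" using pq(1) by (simp_all add: field_simps)
  have u': "decays_at_least u \<theta>'" by (rule decays_at_least_mono[OF u \<theta>'(2)])
  have "p * A < p * \<theta>'" using \<theta>'(1) pq(1) by simp
  have v: "decays_at_least v (p * \<theta>' - \<alpha>)"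
    using decays_at_least_powr[OF u' pq(1)] bounded_range_powr[OF ub less_imp_le[OF upos] pq(1)]
      upos \<alpha>(1) \<theta>'(3) \<open>p * A < p * \<theta>'\<close> pA \<open>0 < B\<close> pot_v
    by (intro riesz_pot_decays_at_least) (auto simp: N_def intro: less_imp_le)
  define r0 where "r0 = N * (p * q - 1) / (\<alpha> * (q + 1))"
  define s0 where "s0 = N * (p * q - 1) / (\<alpha> * (p + 1))"
  have r0: "0 < r0" "A * r0 = N" and s0: "0 < s0" "B * s0 = N"
    using \<alpha> pq by (simp_all add: r0_def s0_def A_def B_def N_def)
  have "in_Lp r0 u"
    using um ub upos u' \<theta>'(1) r0
    by (intro in_Lp_if_decays_at_least) (auto simp: N_def[symmetric] intro: less_imp_le mult_strict_right_mono)
  moreover have "in_Lp s0 v"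
    using vm vb vpos v s0 \<open>p * A < p * \<theta>'\<close> pA
    by (intro in_Lp_if_decays_at_least) (auto simp: N_def[symmetric] intro: less_imp_le mult_strict_right_mono)
  ultimately show False using not_Lp by (simp add: r0_def s0_def)
qed

theorem theorem1p3:
  fixes u v :: "real^'n \<Rightarrow> real" and \<alpha> p q :: real
  assumes n3: "CARD('n) \<ge> 3"
    and \<alpha>: "0 < \<alpha>" "\<alpha> < real CARD('n)"
    and pq: "p > 0" "q > 0" "p * q > 1"
    and sol: "pos_bdd_solution \<alpha> p q u v"
  shows
    "(\<forall>\<theta>1 \<theta>2. \<theta>1 < \<alpha> * (q + 1) / (p * q - 1) \<and> \<theta>2 < \<alpha> * (p + 1) / (p * q - 1) \<longrightarrow>
        \<not> (\<exists>C>0. \<exists>R. \<forall>x. norm x \<ge> R \<longrightarrow> u x \<ge> C * (1 + norm x) powr (- \<theta>1)) \<and>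
        \<not> (\<exists>C>0. \<exists>R. \<forall>x. norm x \<ge> R \<longrightarrow> v x \<ge> C * (1 + norm x) powr (- \<theta>2)))
     \<and>
     (\<not> (in_Lp (real CARD('n) * (p * q - 1) / (\<alpha> * (q + 1))) u \<and>
          in_Lp (real CARD('n) * (p * q - 1) / (\<alpha> * (p + 1))) v) \<longrightarrow>
      (\<forall>\<theta>3 \<theta>4. \<theta>3 > \<alpha> * (q + 1) / (p * q - 1) \<and> \<theta>4 > \<alpha> * (p + 1) / (p * q - 1) \<longrightarrow>
        \<not> (\<exists>C>0. \<exists>R. \<forall>x. norm x \<ge> R \<longrightarrow> u x \<le> C * (1 + norm x) powr (- \<theta>3)) \<and>
        \<not> (\<exists>C>0. \<exists>R. \<forall>x. norm x \<ge> R \<longrightarrow> v x \<le> C * (1 + norm x) powr (- \<theta>4))))"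
proof -
  have qp: "1 < q * p" and pq_comm: "q * p = p * q" using pq(3) by (simp_all add: mult.commute)
  note sol' = pos_bdd_solution_swap[OF sol]
  note not_most = pos_bdd_solution_not_decays_at_most[OF \<alpha>(2)]
  note not_least = pos_bdd_solution_not_decays_at_least[OF \<alpha>]
  from not_most[OF pq sol] not_most[OF pq(2,1) qp sol', unfolded pq_comm]
    not_least[OF pq sol] not_least[OF pq(2,1) qp sol', unfolded pq_comm]
  show ?thesis
    by (intro conjI allI impI notI) (auto dest!: decays_at_most_of_one_plus_norm decays_at_least_of_one_plus_norm)
qed

end
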